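(* For every $M$ with $\frac12\le M<\frac34$, every deterministic semi-online algorithm with migration factor $M$ for scheduling on two hierarchical machines with known optimal makespan (bin stretching) has competitive ratio at least $2-M$.
   Context: Model (two hierarchical machines with migration, bin stretching). Jobs $1,2,\dots,n$ arrive one by one ($n$ unknown in advance). Job $j$ has a size $p_j>0$ and a grade of service (GoS) $g_j\in\{1,2\}$; a job of GoS $1$ may only be processed on machine $m_1$, a job of GoS $2$ may be processed on $m_1$ or on $m_2$. The load of a machine is the total size of its jobs, the makespan is the maximum load. When job $j$ arrives, the algorithm must assign it, and may migrate previously arrived jobs (respecting GoS) of total size at most $M\cdot p_j$ (migration factor $M$). Bin stretching: the optimal offline makespan of the complete input is known in advance to the algorithm (scaled to $1$). The competitive ratio is the supremum over inputs of (algorithm's makespan)/(optimal makespan). *)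

theory Defs
  imports Complex_Main
begin

text \<open>An input is a list of jobs;
  jobs are indexed 0 .. length - 1.  A schedule is a function nat => bool,
  where True means "assigned to machine m2" and False "assigned to m1";
  only its values on indices below the input length matter.\<close>

type_synonym job = "real \<times> nat"
type_synonym schedule = "nat \<Rightarrow> bool"

definition size_of :: "job \<Rightarrow> real" where "size_of j = fst j"
definition gos :: "job \<Rightarrow> nat" where "gos j = snd j"

definition valid_input :: "job list \<Rightarrow> bool" where
  "valid_input \<sigma> \<longleftrightarrow> (\<forall>j \<in> set \<sigma>. size_of j > 0 \<and> gos j \<in> {1, 2})"

definition feasible :: "job list \<Rightarrow> schedule \<Rightarrow> bool" where
  "feasible \<sigma> s \<longleftrightarrow> (\<forall>i < length \<sigma>. s i \<longrightarrow> gos (\<sigma> ! i) = 2)"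

definition load1 :: "job list \<Rightarrow> schedule \<Rightarrow> real" where
  "load1 \<sigma> s = (\<Sum>i \<in> {i. i < length \<sigma> \<and> \<not> s i}. size_of (\<sigma> ! i))"

definition load2 :: "job list \<Rightarrow> schedule \<Rightarrow> real" where
  "load2 \<sigma> s = (\<Sum>i \<in> {i. i < length \<sigma> \<and> s i}. size_of (\<sigma> ! i))"

definition makespan :: "job list \<Rightarrow> schedule \<Rightarrow> real" where
  "makespan \<sigma> s = max (load1 \<sigma> s) (load2 \<sigma> s)"

text \<open>Optimal offline makespan (the set is finite and nonempty).\<close>
definition opt :: "job list \<Rightarrow> real" where
  "opt \<sigma> = Min {makespan \<sigma> s | s. feasible \<sigma> s}"

definition migrated :: "job list \<Rightarrow> schedule \<Rightarrow> schedule \<Rightarrow> real" where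
  "migrated xs s_old s_new =
     (\<Sum>i \<in> {i. i < length xs \<and> s_old i \<noteq> s_new i}. size_of (xs ! i))"

text \<open>A deterministic semi-online algorithm for bin stretching is a function
  A T xs giving the schedule maintained after the jobs xs have arrived, when the
  optimal makespan T of the complete input is known in advance.\<close>
definition semi_online_alg :: "real \<Rightarrow> (real \<Rightarrow> job list \<Rightarrow> schedule) \<Rightarrow> bool" where
  "semi_online_alg M A \<longleftrightarrow>
     (\<forall>T xs x. valid_input (xs @ [x]) \<longrightarrow>
        feasible (xs @ [x]) (A T (xs @ [x])) \<and>
        migrated xs (A T xs) (A T (xs @ [x])) \<le> M * size_of x)"

end

theory Submission
  imports Defs
begin

text \<open>Start with a GoS-1 job of size \<open>1 - e\<close> and a GoS-2 job of size \<open>e\<close>, where \<open>e\<close>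
  is slightly larger than \<open>M\<close>.  Every later job has size at most 1, so the
  budget \<open>M \<le> M * 1 < e\<close> never allows the second job to migrate.  If the algorithm
  put it on \<open>m\<^sub>1\<close>, a GoS-1 job of size \<open>e\<close> follows and \<open>m\<^sub>1\<close> ends with load \<open>1 + e\<close>;
  if it put it on \<open>m\<^sub>2\<close>, a GoS-2 job of size 1 follows and the makespan is at least
  \<open>min (1 + e) (2 - e) = 2 - e\<close>.  Both inputs have optimal makespan 1, so the algorithm
  is always told \<open>T = 1\<close>.  The argument only uses \<open>M < 1\<close>, not \<open>M < 3/4\<close>.\<close>

lemma finite_makespans: "finite {makespan \<sigma> s | s. feasible \<sigma> s}"
proof (rule finite_subset)
  have "makespan \<sigma> s = makespan \<sigma> (\<lambda>i. i \<in> {i. i < length \<sigma> \<and> s i})" for s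
    unfolding makespan_def load1_def load2_def by (auto intro!: arg_cong2[where f = max] sum.cong)
  then show "{makespan \<sigma> s | s. feasible \<sigma> s}
      \<subseteq> (\<lambda>B. makespan \<sigma> (\<lambda>i. i \<in> B)) ` Pow {..<length \<sigma>}"
    by blast
qed simp

lemma opt_eqI:
  assumes "feasible \<sigma> s" "makespan \<sigma> s = v" "\<And>s. feasible \<sigma> s \<Longrightarrow> v \<le> makespan \<sigma> s"
  shows "opt \<sigma> = v"
  unfolding opt_def by (rule Min_eqI[OF finite_makespans]) (use assms in auto)

lemma sum_below_three:
  "(\<Sum>i\<in>{i. i < 3 \<and> P i}. f i) =
     (if P 0 then f 0 else 0) + (if P 1 then f 1 else 0) + (if P 2 then f (2::nat) else (0::real))"
proof -
  have "{i. i < 3 \<and> P i} = {i\<in>{0,1,2::nat}. P i}" by auto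
  then have "(\<Sum>i\<in>{i. i < 3 \<and> P i}. f i) = (\<Sum>i\<in>{0,1,2::nat}. if P i then f i else 0)"
    by (simp only: sum.inter_filter finite.intros)
  then show ?thesis by (simp add: add.assoc)
qed

lemma length_three: "length [x, y, z] = 3"
  by simp

lemma load1_three:
  "load1 [x, y, z] s =
     (if s 0 then 0 else size_of x) + (if s 1 then 0 else size_of y) + (if s 2 then 0 else size_of z)"
  unfolding load1_def by (simp only: length_three sum_below_three) simp

lemma load2_three:
  "load2 [x, y, z] s =
     (if s 0 then size_of x else 0) + (if s 1 then size_of y else 0) + (if s 2 then size_of z else 0)"
  unfolding load2_def by (simp only: length_three sum_below_three) simp

lemma feasible_three:
  "feasible [x, y, z] s \<longleftrightarrow> (s 0 \<longrightarrow> gos x = 2) \<and> (s 1 \<longrightarrow> gos y = 2) \<and> (s 2 \<longrightarrow> gos z = 2)"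
  unfolding feasible_def by (auto simp: less_Suc_eq numeral_3_eq_3 numeral_2_eq_2)

lemma migrated_ge_size:
  assumes "i < length xs" "s_old i \<noteq> s_new i" "\<forall>j \<in> set xs. size_of j > 0"
  shows "size_of (xs ! i) \<le> migrated xs s_old s_new"
  unfolding migrated_def
  by (rule member_le_sum) (use assms in \<open>auto intro: less_imp_le\<close>)

lemma semi_online_alg_feasible:
  assumes "semi_online_alg M A" "valid_input (xs @ [x])"
  shows "feasible (xs @ [x]) (A T (xs @ [x]))"
  using assms unfolding semi_online_alg_def by blast

lemma semi_online_alg_keeps_large_job:
  assumes alg: "semi_online_alg M A" and valid: "valid_input (xs @ [x])"
    and "i < length xs" and large: "M * size_of x < size_of (xs ! i)"
  shows "A T (xs @ [x]) i = A T xs i"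
proof (rule ccontr)
  assume "A T (xs @ [x]) i \<noteq> A T xs i"
  moreover have "\<forall>j \<in> set xs. size_of j > 0" using valid by (simp add: valid_input_def)
  ultimately have "size_of (xs ! i) \<le> migrated xs (A T xs) (A T (xs @ [x]))"
    using migrated_ge_size \<open>i < length xs\<close> by metis
  also have "\<dots> \<le> M * size_of x" using alg valid unfolding semi_online_alg_def by blast
  finally show False using large by simp
qed

lemma opt_two_gos1_input:
  assumes "0 < e" "e < 1"
  shows "opt [(1 - e, 1), (e, 2), (e, 1)] = 1"
  by (rule opt_eqI[of _ "\<lambda>i. i = 1"])
    (use assms in \<open>auto simp: feasible_three load1_three load2_three makespan_def size_of_def gos_def\<close>)

lemma opt_unit_gos2_input:
  assumes "0 < e" "e < 1"
  shows "opt [(1 - e, 1), (e, 2), (1, 2)] = 1"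
  by (rule opt_eqI[of _ "\<lambda>i. i = 2"])
    (use assms in \<open>auto simp: feasible_three load1_three load2_three makespan_def size_of_def gos_def\<close>)

lemma adversary_forces_makespan:
  fixes e :: real
  assumes alg: "semi_online_alg M A" and "0 \<le> M" "M < e" "1/2 \<le> e" "e < 1"
  shows "\<exists>\<sigma> \<in> {[(1 - e, 1), (e, 2), (e, 1)], [(1 - e, 1), (e, 2), (1, 2)]}.
           valid_input \<sigma> \<and> opt \<sigma> = 1 \<and> 2 - e \<le> makespan \<sigma> (A 1 \<sigma>)"
proof -
  define prefix :: "job list" where "prefix = [(1 - e, 1), (e, 2)]"
  have no_migration: "M * size_of x < size_of (prefix ! 1)" if "size_of x \<le> 1" for x
  proof -
    have "M * size_of x \<le> M" using that \<open>0 \<le> M\<close> by (simp add: mult_left_le)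
    then show ?thesis using assms by (simp add: prefix_def size_of_def)
  qed
  show ?thesis
  proof (cases "A 1 prefix 1")
    case False
    define \<sigma> where "\<sigma> = prefix @ [(e, 1)]"
    have valid: "valid_input \<sigma>" using assms by (auto simp: \<sigma>_def prefix_def valid_input_def size_of_def gos_def)
    have "\<not> A 1 \<sigma> 1"
      using semi_online_alg_keeps_large_job[OF alg valid[unfolded \<sigma>_def] _ no_migration] False assms
      by (simp add: \<sigma>_def prefix_def size_of_def)
    moreover have "feasible \<sigma> (A 1 \<sigma>)" using semi_online_alg_feasible[OF alg] valid by (simp add: \<sigma>_def)
    ultimately have "load1 \<sigma> (A 1 \<sigma>) = 1 + e"
      by (simp add: \<sigma>_def prefix_def feasible_three load1_three size_of_def gos_def)
    then have "2 - e \<le> makespan \<sigma> (A 1 \<sigma>)" using assms by (simp add: makespan_def)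
    then show ?thesis using valid opt_two_gos1_input assms by (auto simp: \<sigma>_def prefix_def)
  next
    case True
    define \<sigma> where "\<sigma> = prefix @ [(1, 2)]"
    have valid: "valid_input \<sigma>" using assms by (auto simp: \<sigma>_def prefix_def valid_input_def size_of_def gos_def)
    have "A 1 \<sigma> 1"
      using semi_online_alg_keeps_large_job[OF alg valid[unfolded \<sigma>_def] _ no_migration] True
      by (simp add: \<sigma>_def prefix_def size_of_def)
    moreover have "feasible \<sigma> (A 1 \<sigma>)" using semi_online_alg_feasible[OF alg] valid by (simp add: \<sigma>_def)
    ultimately have "2 - e \<le> makespan \<sigma> (A 1 \<sigma>)" using assms
      by (cases "A 1 \<sigma> 2")
        (auto simp: \<sigma>_def prefix_def feasible_three load1_three load2_three makespan_def size_of_def gos_def)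
    then show ?thesis using valid opt_unit_gos2_input assms by (auto simp: \<sigma>_def prefix_def)
  qed
qed

theorem mainTheorem15:
  fixes M c :: real and A :: "real \<Rightarrow> job list \<Rightarrow> schedule"
  assumes "1/2 \<le> M" and "M < 3/4"
    and "semi_online_alg M A"
    and "c < 2 - M"
  shows "\<exists>\<sigma>. \<sigma> \<noteq> [] \<and> valid_input \<sigma> \<and> makespan \<sigma> (A (opt \<sigma>) \<sigma>) > c * opt \<sigma>"
proof -
  define d where "d = min ((2 - M - c) / 2) ((1 - M) / 2)"
  have "0 < d" "d < 2 - M - c" "d < 1 - M" using assms by (auto simp: d_def min_def)
  then obtain \<sigma> where "valid_input \<sigma>" "\<sigma> \<noteq> []" "opt \<sigma> = 1" "2 - (M + d) \<le> makespan \<sigma> (A 1 \<sigma>)"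
    using adversary_forces_makespan[OF assms(3), of "M + d"] assms(1) by auto
  then show ?thesis using \<open>d < 2 - M - c\<close> by (intro exI[of _ \<sigma>]) auto
qed

end
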